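(* Consider the channel $y=hx+v$ with $v\sim\mathcal{CN}(0,1)$ independent of everything, perfect CSI at transmitter and receiver, and suppose $|h|^2$ has a continuous probability density $f$, finite mean, and cumulative distribution function $F$ that is strictly increasing on its support. Fix $A>1$. Let $$C(\mathrm{SNR})=\sup\ \mathbf{E}\left[\log\left(1+P(h)|h|^2\right)\right],$$ the supremum being over measurable power allocations $P(h)\ge0$ with $\mathbf{E}[P(h)]\le \mathrm{SNR}$ and $\max_h P(h)\le A\,\mathrm{SNR}$. Then $$\lim_{\mathrm{SNR}\to0}\frac{C(\mathrm{SNR})}{A\,\mathrm{SNR}\int_{1-\frac1A}^{1}F^{-1}(t)\,dt}=1,$$ where $\int_{1-\frac1A}^1F^{-1}(t)\,dt=\int_{F^{-1}(1-1/A)}^\infty t f(t)\,dt$.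
   Context: Logarithms are natural (capacity in nats per channel use). $A$ is the peak-to-average power ratio. Equivalently, $C(\mathrm{SNR})=\int_\lambda^\infty \min\{\log(t/\lambda),\log(1+A\,\mathrm{SNR}\,t)\}f(t)\,dt$, where $\lambda$ is determined by $\mathrm{SNR}=\mathbf{E}[\min\{[1/\lambda-1/|h|^2]^+,A\,\mathrm{SNR}\}]$. *)

theory Defs
  imports "HOL-Probability.Probability"
begin

text \<open>M is the distribution of the fading coefficient h (a complex random variable).
  The channel gain is |h|^2 = (cmod h)^2.\<close>

definition gainCDF :: "complex measure \<Rightarrow> real \<Rightarrow> real" where
  "gainCDF M t = measure M {z \<in> space M. (cmod z)^2 \<le> t}"

definition gainSupport :: "complex measure \<Rightarrow> real set" where
  "gainSupport M = {t. \<forall>e>0. measure M {z \<in> space M. (cmod z)^2 \<in> ball t e} > 0}"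

definition gainQuantile :: "complex measure \<Rightarrow> real \<Rightarrow> real" where
  "gainQuantile M u = Inf {t. gainCDF M t \<ge> u}"

definition admissible :: "complex measure \<Rightarrow> real \<Rightarrow> real \<Rightarrow> (complex \<Rightarrow> real) set" where
  "admissible M A snr = {P. P \<in> borel_measurable M \<and> (\<forall>z. 0 \<le> P z) \<and>
      integrable M P \<and> integral\<^sup>L M P \<le> snr \<and> (\<forall>z. P z \<le> A * snr)}"

definition capacity :: "complex measure \<Rightarrow> real \<Rightarrow> real \<Rightarrow> real" where
  "capacity M A snr = (SUP P\<in>admissible M A snr. integral\<^sup>L M (\<lambda>z. ln (1 + P z * (cmod z)^2)))"

end

theory Submission
  imports Defs
begin

text \<open>At low SNR, \<open>ln (1 + P |h|\<^sup>2) \<approx> P |h|\<^sup>2\<close>, so the capacity is essentially the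
  value of the linear program of maximising \<open>E[P |h|\<^sup>2]\<close> under the power constraints.
  Its optimum spends the peak power \<open>A SNR\<close> on the event \<open>|h|\<^sup>2 > q\<close> of probability \<open>1/A\<close>,
  \<open>q = F\<^sup>-\<^sup>1(1 - 1/A)\<close>, and has value \<open>A SNR K\<close> with \<open>K = E[|h|\<^sup>2; |h|\<^sup>2 > q]\<close>.
  A pointwise exchange argument shows that \<open>A SNR K\<close> bounds the capacity from above, while
  this on-off allocation, evaluated with the true logarithmic rate, attains it asymptotically by
  dominated convergence. Finally \<open>K\<close> is the quantile integral, because the quantile function
  pushes the uniform distribution on \<open>(0,1)\<close> forward to the law of \<open>|h|\<^sup>2\<close>.\<close>

subsection \<open>Limits of the logarithmic rate\<close>

lemma tendsto_mult_ln_one_plus_div_at_top: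
  fixes c :: real
  assumes "0 \<le> c"
  shows "((\<lambda>x. x * ln (1 + c / x)) \<longlongrightarrow> c) at_top"
proof (rule tendsto_sandwich[where f="\<lambda>x. c - c^2 / x" and h="\<lambda>x. c"])
  show "\<forall>\<^sub>F x in at_top. c - c\<^sup>2 / x \<le> x * ln (1 + c / x)"
    using eventually_ge_at_top[of "c + 1"]
  proof eventually_elim
    case (elim x)
    then have "x > 0" using assms by simp
    have "c / x - (c / x)^2 \<le> ln (1 + c / x)"
      by (rule ln_one_plus_pos_lower_bound) (use assms elim in auto)
    then have "x * (c / x - (c / x)^2) \<le> x * ln (1 + c / x)"
      using \<open>x > 0\<close> by (intro mult_left_mono) auto
    moreover have "x * (c / x - (c / x)^2) = c - c^2 / x"
      using \<open>x > 0\<close> by (simp add: field_simps power2_eq_square)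
    ultimately show ?case by simp
  qed
  show "\<forall>\<^sub>F x in at_top. x * ln (1 + c / x) \<le> c"
    using eventually_gt_at_top[of 0]
  proof eventually_elim
    case (elim x)
    have "ln (1 + c / x) \<le> c / x"
      by (rule ln_add_one_self_le_self) (use assms elim in auto)
    then have "x * ln (1 + c / x) \<le> x * (c / x)"
      using elim by (intro mult_left_mono) auto
    then show ?case using elim by simp
  qed
  show "((\<lambda>x. c - c\<^sup>2 / x) \<longlongrightarrow> c) at_top"
    using tendsto_diff[OF tendsto_const tendsto_divide_0[OF tendsto_const
        filterlim_at_top_imp_at_infinity[OF filterlim_ident]], of c "c^2"] by simp
qed simp

lemma tendsto_integral_ln_one_plus_div_at_right_0:
  fixes h :: "'a \<Rightarrow> real"
  assumes h: "integrable M h" and h_nonneg: "\<And>x. 0 \<le> h x"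
  shows "((\<lambda>s. (\<integral>x. ln (1 + s * h x) \<partial>M) / s) \<longlongrightarrow> (\<integral>x. h x \<partial>M)) (at_right 0)"
  unfolding filterlim_at_right_to_top
proof (rule Lim_transform_eventually)
  have [measurable]: "h \<in> borel_measurable M"
    using h by (rule borel_measurable_integrable)
  show "((\<lambda>t. \<integral>x. t * ln (1 + h x / t) \<partial>M) \<longlongrightarrow> (\<integral>x. h x \<partial>M)) at_top"
  proof (rule integral_dominated_convergence_at_top[where w=h])
    show "AE x in M. ((\<lambda>t. t * ln (1 + h x / t)) \<longlongrightarrow> h x) at_top"
      using tendsto_mult_ln_one_plus_div_at_top h_nonneg by blast
    show "\<forall>\<^sub>F t in at_top. AE x in M. norm (t * ln (1 + h x / t)) \<le> h x"
      using eventually_gt_at_top[of 0]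
    proof eventually_elim
      case (elim t)
      show ?case
      proof (rule AE_I2)
        fix x
        have nonneg: "0 \<le> h x / t" using h_nonneg[of x] elim by simp
        have "t * ln (1 + h x / t) \<le> t * (h x / t)"
          by (rule mult_left_mono[OF ln_add_one_self_le_self[OF nonneg]]) (use elim in simp)
        then show "norm (t * ln (1 + h x / t)) \<le> h x"
          using nonneg elim by simp
      qed
    qed
  qed (use h in simp_all)
  show "\<forall>\<^sub>F t in at_top. (\<integral>x. t * ln (1 + h x / t) \<partial>M) =
      (\<integral>x. ln (1 + inverse t * h x) \<partial>M) / inverse t"
    using eventually_gt_at_top[of 0]
    by eventually_elim (simp add: divide_inverse mult.commute)
qed

subsection \<open>The threshold of the optimal on-off allocation\<close>

lemma distributed_measure_singleton:
  assumes "distributed M lborel X (\<lambda>t. ennreal (f t))"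
  shows "measure M (X -` {t} \<inter> space M) = 0"
proof -
  have [measurable]: "X \<in> borel_measurable M"
    using distributed_measurable[OF assms] by simp
  have "emeasure (density lborel f) {t} = (\<integral>\<^sup>+x. ennreal (f x) * indicator {t} x \<partial>lborel)"
    by (rule emeasure_density) (use distributed_borel_measurable[OF assms] in simp_all)
  also have "\<dots> = 0"
    by (rule nn_integral_null_set) (simp add: null_sets_def)
  finally have density_singleton: "emeasure (density lborel f) {t} = 0" .
  have "measure M (X -` {t} \<inter> space M) = measure (distr M lborel X) {t}"
    by (rule measure_distr[symmetric]) simp_all
  also have "\<dots> = measure (density lborel f) {t}"
    unfolding distributed_distr_eq_density[OF assms] ..
  also have "\<dots> = 0"
    using density_singleton by (simp add: measure_def)
  finally show ?thesis .
qed

context cdf_distribution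
begin

lemma cdf_quantile_eq:
  assumes "0 < a" "a < 1" and no_atom: "measure M {I a} = 0"
  shows "C (I a) = a"
proof (rule antisym)
  have "isCont C (I a)"
    using isCont_cdf no_atom by blast
  then have "(C \<longlongrightarrow> C (I a)) (at_left (I a))"
    unfolding isCont_def filterlim_at_split by blast
  moreover have "\<forall>\<^sub>F x in at_left (I a). C x \<le> a"
  proof -
    have "C x \<le> a" if "x < I a" for x
      using pseudoinverse[OF assms(1,2), of x] that by linarith
    then show ?thesis
      unfolding eventually_at_left_field by (intro exI[of _ "I a - 1"]) simp
  qed
  ultimately show "C (I a) \<le> a"
    by (rule tendsto_upperbound) simp
  show "a \<le> C (I a)"
    using pseudoinverse[OF assms(1,2), of "I a"] by simp
qed

text \<open>Without \<open>C (I a) = a\<close>, an atom of \<open>M\<close> at \<open>I a\<close> would be split between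
  \<open>u \<le> a\<close> and \<open>u > a\<close>, and the right-hand side would miss its upper part.\<close>

lemma interval_integral_quantile_upper:
  assumes "0 < a" "a < 1" and cdf_eq: "C (I a) = a"
  shows "(LBINT u=a..1. I u) = (\<integral>t. indicator {I a<..} t * t \<partial>M)"
proof -
  let ?U = "restrict_space lborel {0<..<1::real}"
  have [measurable]: "I \<in> borel_measurable ?U"
    using measurable_CI
    by (simp add: measurable_cong_sets[OF sets_restrict_space_cong[OF sets_lborel] refl])
  have upper_iff: "a < u \<longleftrightarrow> I a < I u" if "0 < u" "u < 1" for u
    using pseudoinverse[OF that, of "I a"] cdf_eq by auto
  have "(LBINT u=a..1. I u) = (\<integral>u. indicator {a<..<1} u *\<^sub>R I u \<partial>lborel)"
    using assms(1,2) einterval_eq(1)[of a 1]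
    by (simp add: interval_lebesgue_integral_def set_lebesgue_integral_def one_ereal_def)
  also have "\<dots> = (\<integral>u. indicator {0<..<1} u *\<^sub>R (indicator {I a<..} (I u) * I u) \<partial>lborel)"
  proof (rule Bochner_Integration.integral_cong[OF refl])
    fix u :: real
    show "indicator {a<..<1} u *\<^sub>R I u = indicator {0<..<1} u *\<^sub>R (indicator {I a<..} (I u) * I u)"
      using upper_iff[of u] assms(1,2) by (cases "0 < u \<and> u < 1") (auto simp: indicator_def)
  qed
  also have "\<dots> = (\<integral>u. indicator {I a<..} (I u) * I u \<partial>?U)"
    by (rule integral_restrict_space[symmetric]) simp
  also have "\<dots> = (\<integral>t. indicator {I a<..} t * t \<partial>distr ?U borel I)"
    by (rule integral_distr[symmetric]) simp_all
  also have "distr ?U borel I = M"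
    by (rule distr_I_eq_M)
  finally show ?thesis .
qed

end

lemma borel_measurable_norm_square:
  assumes "sets M = sets borel"
  shows "(\<lambda>z::'a::real_normed_vector. (norm z)^2) \<in> borel_measurable M"
proof -
  have "(\<lambda>z::'a. (norm z)^2) \<in> borel_measurable borel"
    by measurable
  then show ?thesis
    using measurable_cong_sets[OF assms refl] by blast
qed

lemma gainCDF_eq_cdf_distr:
  assumes "sets M = sets borel"
  shows "gainCDF M = cdf (distr M borel (\<lambda>z. (cmod z)^2))"
proof
  fix t
  have [measurable]: "(\<lambda>z. (cmod z)^2) \<in> borel_measurable M"
    using borel_measurable_norm_square[OF assms] by simp
  show "gainCDF M t = cdf (distr M borel (\<lambda>z. (cmod z)^2)) t"
    unfolding gainCDF_def cdf_def
    by (subst measure_distr) (simp_all add: vimage_def sets_eq_imp_space_eq[OF assms])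
qed

lemma gain_quantile_threshold:
  fixes M :: "complex measure"
  assumes "prob_space M" "sets M = sets borel"
    and "distributed M lborel (\<lambda>z. (cmod z)^2) (\<lambda>t. ennreal (f t))"
    and "0 < a" "a < 1"
  defines "q \<equiv> gainQuantile M a"
  shows "0 \<le> q" and "measure M {z. q < (cmod z)^2} = 1 - a"
    and "(LBINT u=a..1. gainQuantile M u) = (\<integral>z. indicator {z. q < (cmod z)^2} z * (cmod z)^2 \<partial>M)"
proof -
  interpret M: prob_space M by fact
  let ?g = "\<lambda>z::complex. (cmod z)^2"
  have space_M: "space M = UNIV"
    using sets_eq_imp_space_eq[OF assms(2)] by simp
  have [measurable]: "?g \<in> borel_measurable M"
    using borel_measurable_norm_square[OF assms(2)] by simp
  define N where "N = distr M borel ?g"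
  interpret N: cdf_distribution N
    unfolding cdf_distribution_def N_def by (rule M.real_distribution_distr) simp
  have cdf_eq: "gainCDF M t = cdf N t" for t
    unfolding N_def gainCDF_eq_cdf_distr[OF assms(2)] ..
  have q_eq: "q = N.I a"
    unfolding q_def gainQuantile_def cdf_eq ..
  have "measure N {q} = 0"
    using distributed_measure_singleton[OF assms(3)] by (simp add: N_def measure_distr)
  then have cdf_q: "cdf N q = a"
    unfolding q_eq by (rule N.cdf_quantile_eq[OF assms(4,5)])
  have prob_below: "measure M {z \<in> space M. ?g z \<le> q} = a"
    using cdf_eq[of q] cdf_q by (simp add: gainCDF_def)
  show "0 \<le> q"
  proof (rule ccontr)
    assume "\<not> 0 \<le> q"
    then have "{z \<in> space M. ?g z \<le> q} = {}"
      by (auto intro: order.trans[OF zero_le_power2])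
    with prob_below assms(4) show False by simp
  qed
  have "{z. q < ?g z} = space M - {z \<in> space M. ?g z \<le> q}"
    by (auto simp: space_M)
  then show "measure M {z. q < ?g z} = 1 - a"
    using M.prob_compl[of "{z \<in> space M. ?g z \<le> q}"] prob_below by simp
  have "gainQuantile M = N.I"
    by (simp add: fun_eq_iff gainQuantile_def cdf_eq)
  then have "(LBINT u=a..1. gainQuantile M u) = (\<integral>t. indicator {q<..} t * t \<partial>N)"
    using N.interval_integral_quantile_upper[OF assms(4,5)] cdf_q by (simp add: q_eq)
  also have "\<dots> = (\<integral>z. indicator {z. q < ?g z} z * ?g z \<partial>M)"
    unfolding N_def by (subst integral_distr) (simp_all add: indicator_def)
  finally show "(LBINT u=a..1. gainQuantile M u) = (\<integral>z. indicator {z. q < ?g z} z * ?g z \<partial>M)" .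
qed

subsection \<open>Bounds on the capacity\<close>

lemma admissible_threshold_allocation:
  assumes "prob_space M" "sets M = sets borel" "0 < A" "0 \<le> s"
    and prob_above: "measure M {z. q < (cmod z)^2} = 1 / A"
  shows "(\<lambda>z. A * s * indicator {z. q < (cmod z)^2} z) \<in> admissible M A s"
proof -
  interpret prob_space M by fact
  have [measurable]: "{z. q < (cmod z)^2} \<in> sets M"
    using assms(2) by simp
  have "integrable M (\<lambda>z. A * s * indicator {z. q < (cmod z)^2} z)"
    by (intro integrable_mult_right integrable_real_indicator) (simp_all add: less_top[symmetric])
  moreover have "(\<integral>z. A * s * indicator {z. q < (cmod z)^2} z \<partial>M) = s"
    using prob_above \<open>0 < A\<close> by simp
  moreover have "(\<lambda>z. A * s * indicator {z. q < (cmod z)^2} z) \<in> borel_measurable M"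
    by measurable
  moreover have "\<forall>z. 0 \<le> A * s * indicator {z. q < (cmod z)^2} z"
    and "\<forall>z. A * s * indicator {z. q < (cmod z)^2} z \<le> A * s"
    using assms(3,4) by (simp_all add: indicator_def)
  ultimately show ?thesis
    unfolding admissible_def mem_Collect_eq by (metis order.refl)
qed

lemma mult_le_threshold_exchange:
  fixes p g q Pmax :: real
  assumes "0 \<le> p" "p \<le> Pmax"
  shows "p * g \<le> Pmax * (indicator {q<..} g * g) + q * (p - Pmax * indicator {q<..} g)"
proof (cases "q < g")
  case True
  then have "0 \<le> (Pmax - p) * (g - q)"
    using assms(2) by simp
  then show ?thesis
    using True by (simp add: algebra_simps)
next
  case False
  then have "p * g \<le> p * q"
    using assms(1) by (intro mult_left_mono) simp_all
  then show ?thesis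
    using False by (simp add: algebra_simps)
qed

lemma admissible_integrable_rate:
  assumes "sets M = sets borel" "integrable M (\<lambda>z. (cmod z)^2)" "P \<in> admissible M A s"
  shows "integrable M (\<lambda>z. P z * (cmod z)^2)"
    and "integrable M (\<lambda>z. ln (1 + P z * (cmod z)^2))"
proof -
  from assms(3) have [measurable]: "P \<in> borel_measurable M"
    and P_nonneg: "\<And>z. 0 \<le> P z" and P_peak: "\<And>z. P z \<le> A * s"
    unfolding admissible_def by auto
  have [measurable]: "(\<lambda>z. (cmod z)^2) \<in> borel_measurable M"
    using borel_measurable_norm_square[OF assms(1)] by simp
  have Pg_nonneg: "0 \<le> P z * (cmod z)^2" for z
    using P_nonneg[of z] by simp
  show Pg_int: "integrable M (\<lambda>z. P z * (cmod z)^2)"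
  proof (rule Bochner_Integration.integrable_bound[of _ "\<lambda>z. A * s * (cmod z)^2"])
    show "integrable M (\<lambda>z. A * s * (cmod z)^2)"
      using assms(2) by simp
    show "AE z in M. norm (P z * (cmod z)^2) \<le> norm (A * s * (cmod z)^2)"
    proof (rule AE_I2)
      fix z
      have "P z * (cmod z)^2 \<le> A * s * (cmod z)^2"
        using P_peak[of z] by (intro mult_right_mono) simp_all
      then show "norm (P z * (cmod z)^2) \<le> norm (A * s * (cmod z)^2)"
        using Pg_nonneg[of z] by simp
    qed
  qed simp
  show "integrable M (\<lambda>z. ln (1 + P z * (cmod z)^2))"
  proof (rule Bochner_Integration.integrable_bound[OF Pg_int])
    show "AE z in M. norm (ln (1 + P z * (cmod z)^2)) \<le> norm (P z * (cmod z)^2)"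
      using Pg_nonneg ln_add_one_self_le_self by (intro AE_I2) simp
  qed simp
qed

lemma integral_ln_le_threshold_bound:
  assumes "prob_space M" "sets M = sets borel" "integrable M (\<lambda>z. (cmod z)^2)"
    and "0 \<le> q" "0 < A" and prob_above: "measure M {z. q < (cmod z)^2} = 1 / A"
    and "P \<in> admissible M A s"
  shows "(\<integral>z. ln (1 + P z * (cmod z)^2) \<partial>M)
      \<le> A * s * (\<integral>z. indicator {z. q < (cmod z)^2} z * (cmod z)^2 \<partial>M)"
proof -
  interpret prob_space M by fact
  let ?g = "\<lambda>z::complex. (cmod z)^2" and ?S = "{z. q < (cmod z)^2}"
  have S_sets: "?S \<in> sets M"
    using assms(2) by simp
  from \<open>P \<in> admissible M A s\<close> have P_nonneg: "\<And>z. 0 \<le> P z" and P_int: "integrable M P"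
    and P_mean: "integral\<^sup>L M P \<le> s" and P_peak: "\<And>z. P z \<le> A * s"
    unfolding admissible_def by auto
  note Pg_int = admissible_integrable_rate(1)[OF assms(2,3,7)]
  have ind_int: "integrable M (indicator ?S :: complex \<Rightarrow> real)"
    by (rule integrable_real_indicator) (simp_all add: S_sets less_top[symmetric])
  have gS_int: "integrable M (\<lambda>z. indicator ?S z * ?g z)"
    using integrable_mult_indicator[OF S_sets assms(3)] by simp
  have bound_int: "integrable M (\<lambda>z. A * s * (indicator ?S z * ?g z) + q * (P z - A * s * indicator ?S z))"
    using gS_int P_int ind_int by simp
  have "(\<integral>z. ln (1 + P z * ?g z) \<partial>M) \<le> (\<integral>z. P z * ?g z \<partial>M)"
    using P_nonneg
    by (intro integral_mono[OF admissible_integrable_rate(2)[OF assms(2,3,7)] Pg_int]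
        ln_add_one_self_le_self) simp
  also have "\<dots> \<le> (\<integral>z. A * s * (indicator ?S z * ?g z) + q * (P z - A * s * indicator ?S z) \<partial>M)"
    using mult_le_threshold_exchange[OF P_nonneg P_peak]
    by (intro integral_mono[OF Pg_int bound_int]) (simp add: indicator_def)
  also have "\<dots> = A * s * (\<integral>z. indicator ?S z * ?g z \<partial>M) + q * (integral\<^sup>L M P - s)"
    using gS_int P_int ind_int prob_above \<open>0 < A\<close>
    by (simp add: sets_eq_imp_space_eq[OF assms(2)])
  also have "\<dots> \<le> A * s * (\<integral>z. indicator ?S z * ?g z \<partial>M)"
    using P_mean \<open>0 \<le> q\<close> by (simp add: mult_nonneg_nonpos)
  finally show ?thesis .
qed

lemma capacity_threshold_bounds:
  assumes "prob_space M" "sets M = sets borel" "integrable M (\<lambda>z. (cmod z)^2)"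
    and "0 \<le> q" "0 < A" "0 \<le> s" and "measure M {z. q < (cmod z)^2} = 1 / A"
  defines "K \<equiv> \<integral>z. indicator {z. q < (cmod z)^2} z * (cmod z)^2 \<partial>M"
  shows "(\<integral>z. ln (1 + A * s * (indicator {z. q < (cmod z)^2} z * (cmod z)^2)) \<partial>M)
           \<le> capacity M A s"
    and "capacity M A s \<le> A * s * K"
proof -
  note on_off = admissible_threshold_allocation[OF assms(1,2,5,6,7)]
  note bound = integral_ln_le_threshold_bound[OF assms(1-5,7), folded K_def]
  have "bdd_above ((\<lambda>P. \<integral>z. ln (1 + P z * (cmod z)^2) \<partial>M) ` admissible M A s)"
    using bound by (intro bdd_aboveI2)
  from cSUP_upper[OF on_off this]
  show "(\<integral>z. ln (1 + A * s * (indicator {z. q < (cmod z)^2} z * (cmod z)^2)) \<partial>M)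
      \<le> capacity M A s"
    unfolding capacity_def by (simp add: mult.assoc)
  show "capacity M A s \<le> A * s * K"
    unfolding capacity_def using on_off bound by (intro cSUP_least) auto
qed

subsection \<open>The low-SNR limit\<close>

lemma filterlim_mult_left_at_right_0:
  fixes c :: real
  assumes "0 < c"
  shows "filterlim (\<lambda>s. c * s) (at_right 0) (at_right 0)"
proof (rule filterlim_at_withinI)
  show "((\<lambda>s. c * s) \<longlongrightarrow> 0) (at_right 0)"
    by (rule tendsto_mult_right_zero) (rule tendsto_ident_at)
  show "\<forall>\<^sub>F s in at_right 0. c * s \<in> {0<..} - {0}"
    using eventually_at_right_less[of 0] by eventually_elim (use assms in simp)
qed

lemma integral_pos_if_pos_on_non_null:
  fixes f :: "'a \<Rightarrow> real"
  assumes f: "integrable M f" and f_nonneg: "\<And>x. 0 \<le> f x"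
    and S: "S \<in> sets M" "S \<notin> null_sets M" and f_pos: "\<And>x. x \<in> S \<Longrightarrow> 0 < f x"
  shows "0 < integral\<^sup>L M f"
proof (rule ccontr)
  assume "\<not> 0 < integral\<^sup>L M f"
  moreover have "0 \<le> integral\<^sup>L M f"
    by (simp add: f_nonneg)
  ultimately have "integral\<^sup>L M f = 0"
    by linarith
  then have "AE x in M. f x = 0"
    using integral_nonneg_eq_0_iff_AE[OF f AE_I2[OF f_nonneg]] by blast
  then have "AE x in M. x \<notin> S"
    by eventually_elim (use f_pos in force)
  with S show False
    using AE_iff_null_sets by blast
qed

lemma tendsto_capacity_div_threshold_bound:
  assumes "prob_space M" "sets M = sets borel" "integrable M (\<lambda>z. (cmod z)^2)"
    and "0 \<le> q" "0 < A" and prob_above: "measure M {z. q < (cmod z)^2} = 1 / A"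
  defines "K \<equiv> \<integral>z. indicator {z. q < (cmod z)^2} z * (cmod z)^2 \<partial>M"
  shows "((\<lambda>s. capacity M A s / (A * s * K)) \<longlongrightarrow> 1) (at_right 0)"
proof -
  let ?S = "{z. q < (cmod z)^2}"
  let ?h = "\<lambda>z. indicator ?S z * (cmod z)^2"
  have S_sets: "?S \<in> sets M"
    using assms(2) by simp
  have h_int: "integrable M ?h"
    using integrable_mult_indicator[OF S_sets assms(3)] by simp
  have h_nonneg: "0 \<le> ?h z" for z
    by simp
  have "?S \<notin> null_sets M"
    using prob_above \<open>0 < A\<close> by (auto simp: measure_def dest: null_setsD1)
  then have "0 < K"
    unfolding K_def
    by (rule integral_pos_if_pos_on_non_null[OF h_int h_nonneg S_sets])
      (use \<open>0 \<le> q\<close> in \<open>auto intro: le_less_trans\<close>)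
  have "((\<lambda>s. (\<integral>z. ln (1 + A * s * ?h z) \<partial>M) / (A * s)) \<longlongrightarrow> K) (at_right 0)"
    using filterlim_compose[OF tendsto_integral_ln_one_plus_div_at_right_0[OF h_int h_nonneg]
        filterlim_mult_left_at_right_0[OF \<open>0 < A\<close>]]
    unfolding K_def by (simp only: mult.assoc)
  from tendsto_divide[OF this tendsto_const, of K] \<open>0 < K\<close>
  have lower: "((\<lambda>s. (\<integral>z. ln (1 + A * s * ?h z) \<partial>M) / (A * s * K)) \<longlongrightarrow> 1) (at_right 0)"
    by simp
  note bounds = capacity_threshold_bounds[OF assms(1-5) _ prob_above, folded K_def]
  show ?thesis
  proof (rule tendsto_sandwich[OF _ _ lower tendsto_const])
    show "\<forall>\<^sub>F s in at_right 0.
        (\<integral>z. ln (1 + A * s * ?h z) \<partial>M) / (A * s * K) \<le> capacity M A s / (A * s * K)"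
      using eventually_at_right_less[of 0]
    proof eventually_elim
      case (elim s)
      have "0 \<le> A * s * K"
        using \<open>0 < A\<close> \<open>0 < K\<close> elim by simp
      with bounds(1)[OF less_imp_le[OF elim]] show ?case
        by (rule divide_right_mono)
    qed
    show "\<forall>\<^sub>F s in at_right 0. capacity M A s / (A * s * K) \<le> 1"
      using eventually_at_right_less[of 0]
    proof eventually_elim
      case (elim s)
      have "0 < A * s * K"
        using \<open>0 < A\<close> \<open>0 < K\<close> elim by simp
      with bounds(2)[OF less_imp_le[OF elim]] show ?case
        by simp
    qed
  qed
qed

theorem theorem1:
  fixes M :: "complex measure" and f :: "real \<Rightarrow> real" and A :: real
  assumes "prob_space M"
    and "sets M = sets borel"
    and "distributed M lborel (\<lambda>z. (cmod z)^2) (\<lambda>t. ennreal (f t))"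
    and "\<And>t. 0 \<le> f t"
    and "continuous_on {0..} f"
    and "integrable M (\<lambda>z. (cmod z)^2)"
    and "strict_mono_on (gainSupport M) (gainCDF M)"
    and "A > 1"
  shows "((\<lambda>snr. capacity M A snr /
            (A * snr * (LBINT u=1 - 1/A..1. gainQuantile M u))) \<longlongrightarrow> 1) (at_right 0)"
proof -
  have "0 < 1 - 1 / A" "1 - 1 / A < 1"
    using assms(8) by (auto simp: field_simps)
  note threshold = gain_quantile_threshold[OF assms(1-3) this]
  have "0 < A"
    using assms(8) by simp
  with threshold(2) have "measure M {z. gainQuantile M (1 - 1 / A) < (cmod z)^2} = 1 / A"
    by simp
  from tendsto_capacity_div_threshold_bound[OF assms(1,2,6) threshold(1) \<open>0 < A\<close> this]
  show ?thesis
    unfolding threshold(3) .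
qed

end
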